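(* Let $X$ be a finite-dimensional real vector space, ordered by a closed cone $X_+$ with non-empty interior. Then the dual cone $\mathcal{L}(X)'_+ := \{\varphi \in \mathcal{L}(X)' : \varphi(T) \ge 0 \text{ for all } T \in \mathcal{L}(X)_+\}$ is equal to the convex hull of the set $E := \{\varphi_{x,x'} : x \in X_+,\ x' \in X'_+\}$ (in particular this convex hull is closed).
   Context: A cone is a non-empty subset $X_+\subseteq X$ with $X_+ + X_+\subseteq X_+$, $\lambda X_+\subseteq X_+$ for $\lambda\ge 0$, and $X_+\cap(-X_+)=\{0\}$. The dual cone is $X'_+ := \{x' \in X' : \langle x', x\rangle \ge 0 \text{ for all } x \in X_+\}$. $\mathcal{L}(X)$ is the space of linear maps $X\to X$ and $\mathcal{L}(X)_+ := \{T: TX_+ \subseteq X_+\}$. For $x \in X$, $x' \in X'$, the functional $\varphi_{x,x'}$ on $\mathcal{L}(X)$ is defined by $\langle \varphi_{x,x'}, M\rangle := \langle x', Mx\rangle = \operatorname{trace}(M(x\otimes x'))$, where $(x\otimes x')y := \langle x', y\rangle x$. *)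

theory Defs
  imports "HOL-Analysis.Analysis"
begin

definition ordering_cone :: "'a::real_vector set \<Rightarrow> bool" where
  "ordering_cone C \<longleftrightarrow> C \<noteq> {} \<and> (\<forall>x\<in>C. \<forall>y\<in>C. x + y \<in> C)
     \<and> (\<forall>c::real. c \<ge> 0 \<longrightarrow> (\<forall>x\<in>C. c *\<^sub>R x \<in> C))
     \<and> C \<inter> uminus ` C = {0}"

text \<open>Dual cone of a set C in a (finite-dimensional) normed space; in finite
  dimension every linear functional is bounded, so blinfun is the algebraic dual.\<close>
definition dual_cone :: "'b::real_normed_vector set \<Rightarrow> ('b \<Rightarrow>\<^sub>L real) set" where
  "dual_cone C = {f. \<forall>x\<in>C. 0 \<le> blinfun_apply f x}"

definition pos_ops :: "'a::euclidean_space set \<Rightarrow> ('a \<Rightarrow>\<^sub>L 'a) set" where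
  "pos_ops C = {T. \<forall>x\<in>C. blinfun_apply T x \<in> C}"

definition phi :: "'a::euclidean_space \<Rightarrow> ('a \<Rightarrow>\<^sub>L real) \<Rightarrow> (('a \<Rightarrow>\<^sub>L 'a) \<Rightarrow>\<^sub>L real)" where
  "phi x x' = Blinfun (\<lambda>M. blinfun_apply x' (blinfun_apply M x))"

end

theory Submission
  imports Defs
begin

text \<open>A functional on \<open>\<L>(X)\<close> is determined by its values on the rank-one operators
  \<open>e\<^sub>i \<otimes> e\<^sub>j\<close>; this embeds \<open>\<L>(X)'\<close> linearly into \<open>\<real>\<^sup>n\<^sup>\<times>\<^sup>n\<close>, and every linear
  functional on \<open>\<real>\<^sup>n\<^sup>\<times>\<^sup>n\<close> becomes evaluation at an operator. The \<open>\<phi>\<^sub>x\<^sub>,\<^sub>x\<^sub>'\<close> with \<open>x, x'\<close>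
  of norm 1 form a compact set whose convex hull avoids 0, because
  \<open>\<psi> \<mapsto> (y \<mapsto> \<psi>(w \<otimes> y))\<close>, for an interior point \<open>w\<close>, maps them into the convex set
  \<open>X\<^sub>+ - {0}\<close>. So the convex cone they generate is closed, and it lies in \<open>conv E\<close> since
  \<open>E\<close> is a cone. A positive functional outside it is separated from it by an operator
  \<open>M\<close> that is non-negative on every \<open>\<phi>\<^sub>x\<^sub>,\<^sub>x\<^sub>'\<close>; by the bipolar theorem for \<open>X\<^sub>+\<close>, \<open>M\<close> is
  then positive, a contradiction.\<close>

lemma convex_cone_if_ordering_cone: "ordering_cone K \<Longrightarrow> convex_cone K"
  unfolding ordering_cone_def convex_cone_iff
  by (metis all_not_in_conv order_refl scaleR_zero_left)

lemma convex_ordering_cone_minus_zero: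
  assumes "ordering_cone K"
  shows "convex (K - {0})"
proof (rule convexI)
  fix x y and u v :: real
  assume x: "x \<in> K - {0}" and y: "y \<in> K - {0}" and uv: "0 \<le> u" "0 \<le> v" "u + v = 1"
  have K: "convex_cone K" using assms by (rule convex_cone_if_ordering_cone)
  have ux: "u *\<^sub>R x \<in> K" and vy: "v *\<^sub>R y \<in> K"
    using x y uv by (auto intro: convex_cone_scaleR[OF K])
  have "u *\<^sub>R x + v *\<^sub>R y \<noteq> 0"
  proof
    assume "u *\<^sub>R x + v *\<^sub>R y = 0"
    then have "u *\<^sub>R x = - (v *\<^sub>R y)" by (simp add: eq_neg_iff_add_eq_0)
    then have "u *\<^sub>R x \<in> K \<inter> uminus ` K" using ux vy by (auto intro: image_eqI)
    moreover have "K \<inter> uminus ` K = {0}" using assms by (simp add: ordering_cone_def)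
    ultimately have "u *\<^sub>R x = 0" by blast
    moreover have "v *\<^sub>R y = 0" using \<open>u *\<^sub>R x + v *\<^sub>R y = 0\<close> calculation by simp
    ultimately show False using x y uv by auto
  qed
  then show "u *\<^sub>R x + v *\<^sub>R y \<in> K - {0}"
    using convex_cone_add[OF K ux vy] by blast
qed

lemma conic_convex_hull: "conic S \<Longrightarrow> conic (convex hull S)"
proof (unfold conic_def, intro allI impI)
  fix y and c :: real
  assume S: "\<forall>x c. x \<in> S \<longrightarrow> 0 \<le> c \<longrightarrow> c *\<^sub>R x \<in> S" and "y \<in> convex hull S" "0 \<le> c"
  from \<open>y \<in> convex hull S\<close> have "c *\<^sub>R y \<in> convex hull ((*\<^sub>R) c ` S)"
    unfolding convex_hull_scaling by (rule imageI)
  also have "\<dots> \<subseteq> convex hull S" using S \<open>0 \<le> c\<close> by (intro hull_mono) auto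
  finally show "c *\<^sub>R y \<in> convex hull S" .
qed

lemma separating_hyperplane_closed_convex_cone:
  fixes z :: "'b::{real_inner,heine_borel}"
  assumes "convex_cone C" "closed C" "z \<notin> C"
  obtains c where "c \<bullet> z < 0" "\<And>y. y \<in> C \<Longrightarrow> 0 \<le> c \<bullet> y"
proof -
  obtain c b where cb: "c \<bullet> z < b" "\<And>y. y \<in> C \<Longrightarrow> b < c \<bullet> y"
    using separating_hyperplane_closed_point assms convex_cone_def by metis
  have "b < 0" using cb(2) convex_cone_contains_0[OF assms(1)] by force
  have "0 \<le> c \<bullet> y" if "y \<in> C" for y
  proof (rule ccontr)
    assume "\<not> 0 \<le> c \<bullet> y"
    then have "b / (c \<bullet> y) \<ge> 0" using \<open>b < 0\<close> by (simp add: divide_nonpos_neg)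
    then have "b < c \<bullet> ((b / (c \<bullet> y)) *\<^sub>R y)"
      using cb(2) convex_cone_scaleR[OF assms(1)] that by blast
    with \<open>\<not> 0 \<le> c \<bullet> y\<close> show False by simp
  qed
  with cb(1) \<open>b < 0\<close> show thesis by (intro that) auto
qed

lemma mem_convex_cone_if_dual_nonneg:
  fixes y :: "'b::{real_inner,heine_borel}"
  assumes "convex_cone K" "closed K" and "\<And>a. (\<forall>x\<in>K. 0 \<le> x \<bullet> a) \<Longrightarrow> 0 \<le> y \<bullet> a"
  shows "y \<in> K"
proof (rule ccontr)
  assume "y \<notin> K"
  then obtain c where "c \<bullet> y < 0" "\<And>x. x \<in> K \<Longrightarrow> 0 \<le> c \<bullet> x"
    using separating_hyperplane_closed_convex_cone assms(1,2) by blast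
  then show False using assms(3)[of c] by (simp add: inner_commute)
qed

lemma inner_pos_if_mem_interior_dual:
  fixes w :: "'b::real_inner"
  assumes "\<forall>x\<in>K. 0 \<le> x \<bullet> a" "a \<noteq> 0" "w \<in> interior K"
  shows "0 < w \<bullet> a"
proof -
  obtain e where "e > 0" "ball w e \<subseteq> K" using assms(3) mem_interior by blast
  define d where "d = e / 2 / norm a"
  have "d > 0" using \<open>e > 0\<close> assms(2) by (simp add: d_def)
  have "w - d *\<^sub>R a \<in> ball w e" using \<open>e > 0\<close> assms(2) by (simp add: d_def dist_norm)
  then have "0 \<le> (w - d *\<^sub>R a) \<bullet> a" using \<open>ball w e \<subseteq> K\<close> assms(1) by blast
  then have "d * (a \<bullet> a) \<le> w \<bullet> a" by (simp add: inner_diff_left)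
  moreover have "0 < d * (a \<bullet> a)" using \<open>d > 0\<close> assms(2) by simp
  ultimately show ?thesis by linarith
qed

definition rank_one :: "'a::real_inner \<Rightarrow> 'a \<Rightarrow> ('a \<Rightarrow>\<^sub>L 'a)" where
  "rank_one x y = Blinfun (\<lambda>z. (z \<bullet> y) *\<^sub>R x)"

lemma rank_one_apply [simp]: "blinfun_apply (rank_one x y) z = (z \<bullet> y) *\<^sub>R x"
proof -
  have "bounded_linear (\<lambda>z. (z \<bullet> y) *\<^sub>R x)" by (intro bounded_linear_intros)
  then show ?thesis unfolding rank_one_def by (simp add: bounded_linear_Blinfun_apply)
qed

lemma phi_apply [simp]: "blinfun_apply (phi x x') M = blinfun_apply x' (blinfun_apply M x)"
proof -
  have "bounded_linear (\<lambda>M. blinfun_apply x' (blinfun_apply M x))"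
    by (rule bounded_linear_compose[OF blinfun.bounded_linear_right])
      (rule bounded_bilinear.bounded_linear_left[OF bounded_bilinear_blinfun_apply])
  then show ?thesis unfolding phi_def by (simp add: bounded_linear_Blinfun_apply)
qed

lemma phi_scaleR_left: "phi (c *\<^sub>R x) x' = c *\<^sub>R phi x x'"
  by (rule blinfun_eqI) (simp add: blinfun.scaleR_right blinfun.scaleR_left)

lemma blinfun_eq_sum_rank_one:
  fixes M :: "'a::euclidean_space \<Rightarrow>\<^sub>L 'a"
  shows "M = (\<Sum>i\<in>Basis. \<Sum>j\<in>Basis. (blinfun_apply M j \<bullet> i) *\<^sub>R rank_one i j)"
proof (rule blinfun_eqI)
  fix x :: 'a
  have "blinfun_apply M x = blinfun_apply M (\<Sum>j\<in>Basis. (x \<bullet> j) *\<^sub>R j)"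
    by (simp add: euclidean_representation)
  also have "\<dots> = (\<Sum>j\<in>Basis. (x \<bullet> j) *\<^sub>R blinfun_apply M j)"
    by (simp add: blinfun.sum_right blinfun.scaleR_right)
  also have "\<dots> = (\<Sum>j\<in>Basis. (x \<bullet> j) *\<^sub>R (\<Sum>i\<in>Basis. (blinfun_apply M j \<bullet> i) *\<^sub>R i))"
    by (simp add: euclidean_representation)
  also have "\<dots> = (\<Sum>i\<in>Basis. \<Sum>j\<in>Basis. ((blinfun_apply M j \<bullet> i) * (x \<bullet> j)) *\<^sub>R i)"
    by (subst sum.swap) (simp add: scaleR_sum_right mult.commute)
  also have "\<dots> = blinfun_apply (\<Sum>i\<in>Basis. \<Sum>j\<in>Basis. (blinfun_apply M j \<bullet> i) *\<^sub>R rank_one i j) x"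
    by (simp add: blinfun.sum_left blinfun.scaleR_left)
  finally show "blinfun_apply M x = \<dots>" .
qed

lemma blinfun_eq_on_rank_oneI:
  fixes \<psi>1 \<psi>2 :: "('a::euclidean_space \<Rightarrow>\<^sub>L 'a) \<Rightarrow>\<^sub>L real"
  assumes "\<And>i j. i \<in> Basis \<Longrightarrow> j \<in> Basis \<Longrightarrow> \<psi>1 (rank_one i j) = \<psi>2 (rank_one i j)"
  shows "\<psi>1 = \<psi>2"
proof (rule blinfun_eqI)
  fix M :: "'a \<Rightarrow>\<^sub>L 'a"
  show "\<psi>1 M = \<psi>2 M"
    by (subst (1 2) blinfun_eq_sum_rank_one)
      (simp add: blinfun.sum_right blinfun.scaleR_right assms)
qed

text \<open>A finite type in bijection with \<open>Basis\<close>, so that functionals on \<open>\<L>(X)\<close> get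
  coordinates in the Euclidean space \<open>real^(n \<times> n)\<close>.\<close>
typedef (overloaded) ('a::euclidean_space) basis_index = "Basis :: 'a set"
  using nonempty_Basis by blast

instance basis_index :: (euclidean_space) finite
proof
  have "UNIV = Abs_basis_index ` (Basis :: 'a set)"
    using type_definition.univ[OF type_definition_basis_index] .
  then show "finite (UNIV :: 'a basis_index set)" by (metis finite_Basis finite_imageI)
qed

definition coords ::
    "(('a::euclidean_space \<Rightarrow>\<^sub>L 'a) \<Rightarrow>\<^sub>L real) \<Rightarrow> real^('a basis_index \<times> 'a basis_index)" where
  "coords \<psi> = (\<chi> p. \<psi> (rank_one (Rep_basis_index (fst p)) (Rep_basis_index (snd p))))"

definition op_of_coords :: "real^('a basis_index \<times> 'a basis_index) \<Rightarrow> ('a::euclidean_space \<Rightarrow>\<^sub>L 'a)" where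
  "op_of_coords c =
     (\<Sum>p\<in>UNIV. (c $ p) *\<^sub>R rank_one (Rep_basis_index (fst p)) (Rep_basis_index (snd p)))"

lemma linear_coords: "linear coords"
  by (rule linearI) (simp_all add: coords_def vec_eq_iff blinfun.add_left blinfun.scaleR_left)

lemma coords_inject: "coords \<psi>1 = coords \<psi>2 \<Longrightarrow> \<psi>1 = \<psi>2"
proof (rule blinfun_eq_on_rank_oneI)
  fix i j :: 'a assume "coords \<psi>1 = coords \<psi>2" "i \<in> Basis" "j \<in> Basis"
  then show "\<psi>1 (rank_one i j) = \<psi>2 (rank_one i j)"
    by (auto simp: coords_def vec_eq_iff) (metis Abs_basis_index_inverse)
qed

lemma apply_op_of_coords: "blinfun_apply \<psi> (op_of_coords c) = c \<bullet> coords \<psi>"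
  by (simp add: op_of_coords_def coords_def inner_vec_def blinfun.sum_right blinfun.scaleR_right)

lemma continuous_on_coords_phi:
  "continuous_on S (\<lambda>(x, a). coords (phi x (blinfun_inner_left a)))"
  unfolding coords_def case_prod_beta
  by (intro continuous_on_vec_lambda) (simp add: continuous_intros)

text \<open>The functional \<open>x'\<close> is given by its Riesz representer \<open>a\<close>.\<close>
definition unit_generators :: "'a::euclidean_space set \<Rightarrow> (('a \<Rightarrow>\<^sub>L 'a) \<Rightarrow>\<^sub>L real) set" where
  "unit_generators K = (\<lambda>(x, a). phi x (blinfun_inner_left a)) `
     ((K \<inter> sphere 0 1) \<times> ({a. \<forall>x\<in>K. 0 \<le> x \<bullet> a} \<inter> sphere 0 1))"

lemma unit_generators_subset:
  "unit_generators K \<subseteq> {phi x x' | x x'. x \<in> K \<and> x' \<in> dual_cone K}"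
proof
  fix \<psi> assume "\<psi> \<in> unit_generators K"
  then obtain x a where "\<psi> = phi x (blinfun_inner_left a)" "x \<in> K" "\<forall>y\<in>K. 0 \<le> y \<bullet> a"
    by (auto simp: unit_generators_def)
  moreover from this(3) have "blinfun_inner_left a \<in> dual_cone K" by (simp add: dual_cone_def)
  ultimately show "\<psi> \<in> {phi x x' | x x'. x \<in> K \<and> x' \<in> dual_cone K}" by blast
qed

lemma compact_coords_unit_generators:
  assumes "closed K"
  shows "compact (coords ` unit_generators K)"
proof -
  have "{a. \<forall>x\<in>K. 0 \<le> x \<bullet> a} = (\<Inter>x\<in>K. {a. x \<bullet> a \<ge> 0})" by auto
  then have "closed {a. \<forall>x\<in>K. 0 \<le> x \<bullet> a}" by (simp add: closed_INT closed_halfspace_ge)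
  then show ?thesis
    unfolding unit_generators_def image_comp o_def prod.case_distrib
    by (intro compact_continuous_image continuous_on_coords_phi
        compact_Times closed_Int_compact assms compact_sphere)
qed

lemma zero_notin_convex_hull_unit_generators:
  assumes K: "ordering_cone K" and w: "w \<in> interior K"
  shows "0 \<notin> convex hull unit_generators K"
proof
  assume "0 \<in> convex hull unit_generators K"
  define T where "T \<psi> = (\<Sum>j\<in>Basis. \<psi> (rank_one w j) *\<^sub>R j)" for \<psi> :: "('a \<Rightarrow>\<^sub>L 'a) \<Rightarrow>\<^sub>L real"
  have "linear T"
    by (rule linearI)
      (simp_all add: T_def blinfun.add_left blinfun.scaleR_left scaleR_add_left sum.distrib
        scaleR_sum_right)
  have T_phi: "T (phi x (blinfun_inner_left a)) = (w \<bullet> a) *\<^sub>R x" for x a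
  proof -
    have "T (phi x (blinfun_inner_left a)) = (w \<bullet> a) *\<^sub>R (\<Sum>j\<in>Basis. (x \<bullet> j) *\<^sub>R j)"
      by (simp add: T_def scaleR_sum_right mult.commute)
    then show ?thesis by (simp add: euclidean_representation)
  qed
  have "T \<psi> \<in> K - {0}" if gen: "\<psi> \<in> unit_generators K" for \<psi>
  proof -
    obtain x a where \<psi>: "\<psi> = phi x (blinfun_inner_left a)"
      and x: "x \<in> K" "norm x = 1" and a: "\<forall>y\<in>K. 0 \<le> y \<bullet> a" "norm a = 1"
      using gen by (auto simp: unit_generators_def)
    have "a \<noteq> 0" using a(2) by auto
    with a(1) have "0 < w \<bullet> a" using w by (rule inner_pos_if_mem_interior_dual)
    then have "(w \<bullet> a) *\<^sub>R x \<in> K" "(w \<bullet> a) *\<^sub>R x \<noteq> 0"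
      using convex_cone_scaleR[OF convex_cone_if_ordering_cone[OF K]] x by auto
    then show ?thesis by (simp add: \<psi> T_phi)
  qed
  then have "T ` unit_generators K \<subseteq> K - {0}" by (rule image_subsetI)
  then have "convex hull (T ` unit_generators K) \<subseteq> K - {0}"
    by (rule hull_minimal) (rule convex_ordering_cone_minus_zero[OF K])
  moreover have "T 0 \<in> convex hull (T ` unit_generators K)"
    by (rule in_convex_hull_linear_image[OF \<open>linear T\<close> \<open>0 \<in> convex hull unit_generators K\<close>])
  ultimately have "T 0 \<in> K - {0}" by blast
  then show False by (simp add: linear_0[OF \<open>linear T\<close>])
qed

lemma closed_convex_cone_hull_coords_unit_generators:
  assumes "ordering_cone K" "closed K" "interior K \<noteq> {}"
  shows "closed (convex_cone hull (coords ` unit_generators K))"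
proof -
  obtain w where "w \<in> interior K" using assms(3) by blast
  have "0 \<notin> coords ` (convex hull unit_generators K)"
    using zero_notin_convex_hull_unit_generators[OF assms(1) \<open>w \<in> interior K\<close>]
      coords_inject[of _ 0] linear_0[OF linear_coords] by (metis imageE)
  then have "0 \<notin> convex hull (coords ` unit_generators K)"
    by (simp add: convex_hull_linear_image[OF linear_coords])
  then show ?thesis
    unfolding convex_cone_hull_separate
    by (intro closed_insert closed_conic_hull)
      (simp add: compact_convex_hull compact_coords_unit_generators assms(2))
qed

lemma mem_pos_ops_if_nonneg_on_unit_generators:
  assumes K: "ordering_cone K" "closed K" and M: "\<forall>\<psi>\<in>unit_generators K. 0 \<le> \<psi> M"
  shows "M \<in> pos_ops K"
  unfolding pos_ops_def
proof (intro CollectI ballI mem_convex_cone_if_dual_nonneg convex_cone_if_ordering_cone K)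
  fix x a assume "x \<in> K" and a: "\<forall>y\<in>K. 0 \<le> y \<bullet> a"
  show "0 \<le> M x \<bullet> a"
  proof (cases "x = 0 \<or> a = 0")
    case True then show ?thesis by (auto simp: blinfun.zero_right)
  next
    case False
    then have "norm x > 0" "norm a > 0" by auto
    have "x /\<^sub>R norm x \<in> K"
      using convex_cone_scaleR[OF convex_cone_if_ordering_cone[OF K(1)] _ \<open>x \<in> K\<close>] by simp
    with a False have "phi (x /\<^sub>R norm x) (blinfun_inner_left (a /\<^sub>R norm a)) \<in> unit_generators K"
      unfolding unit_generators_def by (intro image_eqI[of _ _ "(x /\<^sub>R norm x, a /\<^sub>R norm a)"]) auto
    then have "0 \<le> M (x /\<^sub>R norm x) \<bullet> (a /\<^sub>R norm a)" using M by fastforce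
    also have "\<dots> = (M x \<bullet> a) / (norm x * norm a)"
      by (simp add: blinfun.scaleR_right divide_inverse_commute)
    finally have "0 \<le> (M x \<bullet> a) / (norm x * norm a)" .
    moreover have "0 < norm x * norm a" using \<open>norm x > 0\<close> \<open>norm a > 0\<close> by simp
    ultimately show ?thesis using divide_neg_pos[of "M x \<bullet> a" "norm x * norm a"] by linarith
  qed
qed

lemma dual_cone_pos_ops_subset_convex_cone_hull:
  assumes "ordering_cone K" "closed K" "interior K \<noteq> {}"
  shows "dual_cone (pos_ops K) \<subseteq> convex_cone hull unit_generators K"
proof
  fix \<phi> assume \<phi>: "\<phi> \<in> dual_cone (pos_ops K)"
  show "\<phi> \<in> convex_cone hull unit_generators K"
  proof (rule ccontr)
    let ?C = "convex_cone hull (coords ` unit_generators K)"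
    assume "\<phi> \<notin> convex_cone hull unit_generators K"
    then have "coords \<phi> \<notin> ?C"
      unfolding convex_cone_hull_linear_image[OF linear_coords] by (auto dest: coords_inject)
    then obtain c where c: "c \<bullet> coords \<phi> < 0" "\<And>y. y \<in> ?C \<Longrightarrow> 0 \<le> c \<bullet> y"
      using separating_hyperplane_closed_convex_cone convex_cone_convex_cone_hull
        closed_convex_cone_hull_coords_unit_generators[OF assms] by blast
    have "\<forall>\<psi>\<in>unit_generators K. 0 \<le> \<psi> (op_of_coords c)"
      using c(2) by (simp add: apply_op_of_coords hull_inc)
    then have "op_of_coords c \<in> pos_ops K"
      by (rule mem_pos_ops_if_nonneg_on_unit_generators[OF assms(1,2)])
    with \<phi> have "0 \<le> \<phi> (op_of_coords c)" by (simp add: dual_cone_def)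
    with c(1) show False by (simp add: apply_op_of_coords)
  qed
qed

lemma convex_hull_phi_subset_dual_cone_pos_ops:
  "convex hull {phi x x' | x x'. x \<in> K \<and> x' \<in> dual_cone K} \<subseteq> dual_cone (pos_ops K)"
proof (rule hull_minimal)
  show "{phi x x' | x x'. x \<in> K \<and> x' \<in> dual_cone K} \<subseteq> dual_cone (pos_ops K)"
    by (auto simp: dual_cone_def pos_ops_def)
  show "convex (dual_cone (pos_ops K))"
    by (auto simp: convex_def dual_cone_def blinfun.add_left blinfun.scaleR_left)
qed

lemma convex_cone_convex_hull_phi:
  assumes "convex_cone K"
  shows "convex_cone (convex hull {phi x x' | x x'. x \<in> K \<and> x' \<in> dual_cone K})"
proof -
  have "conic {phi x x' | x x'. x \<in> K \<and> x' \<in> dual_cone K}"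
    using convex_cone_scaleR[OF assms] by (force simp: conic_def phi_scaleR_left[symmetric])
  moreover have "phi 0 0 \<in> {phi x x' | x x'. x \<in> K \<and> x' \<in> dual_cone K}"
    using convex_cone_contains_0[OF assms] by (force simp: dual_cone_def)
  ultimately show ?thesis
    by (auto simp: convex_cone_def conic_convex_hull hull_inc)
qed

theorem proposition2p3:
  fixes K :: "'a::euclidean_space set"
  assumes "ordering_cone K"
    and "closed K"
    and "interior K \<noteq> {}"
  shows "dual_cone (pos_ops K) = convex hull {phi x x' | x x'. x \<in> K \<and> x' \<in> dual_cone K}"
proof (rule antisym)
  have "dual_cone (pos_ops K) \<subseteq> convex_cone hull unit_generators K"
    using assms by (rule dual_cone_pos_ops_subset_convex_cone_hull)
  also have "\<dots> \<subseteq> convex hull {phi x x' | x x'. x \<in> K \<and> x' \<in> dual_cone K}"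
    by (intro hull_minimal subset_trans[OF unit_generators_subset hull_subset]
        convex_cone_convex_hull_phi convex_cone_if_ordering_cone assms(1))
  finally show "dual_cone (pos_ops K) \<subseteq> convex hull {phi x x' | x x'. x \<in> K \<and> x' \<in> dual_cone K}" .
  show "convex hull {phi x x' | x x'. x \<in> K \<and> x' \<in> dual_cone K} \<subseteq> dual_cone (pos_ops K)"
    by (rule convex_hull_phi_subset_dual_cone_pos_ops)
qed

end
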